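(* Let $G=\langle(135)(246),(14)(23)(56)\rangle\le S_6$ (dihedral of order $6$), $G'=\langle G,(12)(34)(56)\rangle$ (of order $12$, with $|G':G|=2$), and $D=\{(6),(5,1),(4,2),(4,1^2),(3^2)\}$. Then: (i) $Aut_0(T_{D;G})\cong S_3\times S_2$; (ii) $Aut_0^{G'}(T_{D;G})\cong S_2\times S_2$.
   Context: For a partition $\lambda=(\lambda_1\ge\dots\ge\lambda_k>0)$ of $6$, a tabloid of shape $\lambda$ is a sequence $A=(A_1,\dots,A_k)$ of pairwise disjoint subsets of $\{1,\dots,6\}$ with $|A_i|=\lambda_i$; $T_\lambda$ is their set. $S_6$ acts by $\zeta A=(\zeta(A_1),\dots,\zeta(A_k))$. Tabloids are partially ordered by $A\le B$ iff $A_1\cup\dots\cup A_i\subseteq B_1\cup\dots\cup B_i$ for all $i\ge1$ (missing rows empty). $T_{\lambda;G}$ is the set of $G$-orbits $O_G(A)$ in $T_\lambda$ and $T_{D;G}=\bigcup_{\mu\in D}T_{\mu;G}$, ordered by $a\le b$ iff there are $A\in a$, $B\in b$ with $A\le B$. $Aut_0(T_{D;G})$ is the group of bijections $\alpha$ of $T_{D;G}$ with $\alpha(a)\le\alpha(b)\iff a\le b$ and $\alpha(T_{\mu;G})=T_{\mu;G}$ for every $\mu\in D$. The group $G'/G$ acts on $T_{D;G}$ by $(\eta G)O_G(A)=O_G(\eta A)$, and $Aut_0^{G'}(T_{D;G})$ is the subgroup of $\alpha\in Aut_0(T_{D;G})$ with $\alpha(\iota a)=\iota\alpha(a)$ for all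 $\iota\in G'/G$ and $a\in T_{D;G}$ (equivalently, automorphisms mapping each pair of distinct $G$-orbits contained in one $G'$-orbit onto such a pair). *)

theory Defs
  imports "HOL-Algebra.Sym_Groups" "HOL-Combinatorics.Transposition"
begin

text \<open>Partitions are lists of positive naturals (weakly decreasing). A tabloid of shape
  lam is a list A of pairwise disjoint subsets of {1..6} with card (A!i) = lam!i.\<close>

type_synonym tabloid = "nat set list"

definition tabloids :: "nat list \<Rightarrow> tabloid set" where
  "tabloids lam = {A. length A = length lam
      \<and> (\<forall>i<length A. A ! i \<subseteq> {1..6} \<and> card (A ! i) = lam ! i)
      \<and> (\<forall>i<length A. \<forall>j<length A. i \<noteq> j \<longrightarrow> A ! i \<inter> A ! j = {})}"

definition tab_act :: "(nat \<Rightarrow> nat) \<Rightarrow> tabloid \<Rightarrow> tabloid" where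
  "tab_act z A = map (\<lambda>S. z ` S) A"

text \<open>Union of the first i rows (missing rows are empty).\<close>
definition rows_upto :: "tabloid \<Rightarrow> nat \<Rightarrow> nat set" where
  "rows_upto A i = \<Union> (set (take i A))"

definition tab_le :: "tabloid \<Rightarrow> tabloid \<Rightarrow> bool" where
  "tab_le A B \<longleftrightarrow> (\<forall>i\<ge>1. rows_upto A i \<subseteq> rows_upto B i)"

text \<open>Subgroup of permutations generated by a set of permutations (finite case: closure
  under composition suffices; all permutations considered here have finite order).\<close>
inductive_set gen_perms :: "(nat \<Rightarrow> nat) set \<Rightarrow> (nat \<Rightarrow> nat) set" for S where
  gen_id: "id \<in> gen_perms S"
| gen_step: "s \<in> S \<Longrightarrow> g \<in> gen_perms S \<Longrightarrow> s \<circ> g \<in> gen_perms S"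

definition orbit_tab :: "(nat \<Rightarrow> nat) set \<Rightarrow> tabloid \<Rightarrow> tabloid set" where
  "orbit_tab G A = (\<lambda>z. tab_act z A) ` G"

definition orbits_shape :: "(nat \<Rightarrow> nat) set \<Rightarrow> nat list \<Rightarrow> tabloid set set" where
  "orbits_shape G lam = orbit_tab G ` tabloids lam"

definition orbits_D :: "(nat \<Rightarrow> nat) set \<Rightarrow> nat list set \<Rightarrow> tabloid set set" where
  "orbits_D G D = (\<Union>mu\<in>D. orbits_shape G mu)"

definition orb_le :: "tabloid set \<Rightarrow> tabloid set \<Rightarrow> bool" where
  "orb_le a b \<longleftrightarrow> (\<exists>A\<in>a. \<exists>B\<in>b. tab_le A B)"

text \<open>Aut_0(T_{D;G}); automorphisms are represented as functions on orbit-sets that are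
  the identity outside T_{D;G}, so that they form a group under composition.\<close>
definition Aut0_set :: "(nat \<Rightarrow> nat) set \<Rightarrow> nat list set \<Rightarrow> (tabloid set \<Rightarrow> tabloid set) set" where
  "Aut0_set G D = {al. bij_betw al (orbits_D G D) (orbits_D G D)
      \<and> (\<forall>a\<in>orbits_D G D. \<forall>b\<in>orbits_D G D. orb_le (al a) (al b) \<longleftrightarrow> orb_le a b)
      \<and> (\<forall>mu\<in>D. al ` orbits_shape G mu = orbits_shape G mu)
      \<and> (\<forall>x. x \<notin> orbits_D G D \<longrightarrow> al x = x)}"

text \<open>Aut_0^{G'}(T_{D;G}): commuting with the action (eta G) O_G(A) = O_G(eta A) of G'/G.\<close>
definition Aut0G'_set :: "(nat \<Rightarrow> nat) set \<Rightarrow> (nat \<Rightarrow> nat) set \<Rightarrow> nat list set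
    \<Rightarrow> (tabloid set \<Rightarrow> tabloid set) set" where
  "Aut0G'_set G G' D = {al \<in> Aut0_set G D. \<forall>eta\<in>G'. \<forall>mu\<in>D. \<forall>A\<in>tabloids mu. \<forall>B.
      al (orbit_tab G A) = orbit_tab G B \<longrightarrow>
      al (orbit_tab G (tab_act eta A)) = orbit_tab G (tab_act eta B)}"

definition fun_group :: "('a \<Rightarrow> 'a) set \<Rightarrow> ('a \<Rightarrow> 'a) monoid" where
  "fun_group X = \<lparr>carrier = X, mult = (\<circ>), one = id\<rparr>"

text \<open>Concrete data. Cycle (a b c) = transpose a b o transpose b c.\<close>
definition G_ex :: "(nat \<Rightarrow> nat) set" where
  "G_ex = gen_perms {transpose 1 3 \<circ> transpose 3 5 \<circ> transpose 2 4 \<circ> transpose 4 6,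
                     transpose 1 4 \<circ> transpose 2 3 \<circ> transpose 5 6}"

definition G'_ex :: "(nat \<Rightarrow> nat) set" where
  "G'_ex = gen_perms {transpose 1 3 \<circ> transpose 3 5 \<circ> transpose 2 4 \<circ> transpose 4 6,
                      transpose 1 4 \<circ> transpose 2 3 \<circ> transpose 5 6,
                      transpose 1 2 \<circ> transpose 3 4 \<circ> transpose 5 6}"

definition D_ex :: "nat list set" where
  "D_ex = {[6], [5,1], [4,2], [4,1,1], [3,3]}"

end

theory Submission
  imports Defs
begin

(* G has fifteen orbits on the tabloids with shapes in D: one each of shapes (6) and (5,1),
   four of shape (4,2), five of shape (4,1,1) and four of shape (3,3).  Computing
   representatives, the order between orbits and the action of t = (12)(34)(56) turns an element
   of Aut_0 into a shape- and order-preserving permutation of the fifteen orbit indices.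
   In the order, the (4,2)-orbit orb 3 is the only one lying above two (4,1,1)-orbits.  The other
   three (4,2)-orbits can be permuted arbitrarily, each dragging along the unique (4,1,1)-orbit
   below it and the unique (3,3)-orbit not below it, while the two (4,1,1)-orbits below orb 3
   can be swapped independently: this is S_3 x S_2.  As G' = G u Gt, commuting with G'/G means
   commuting with t, which transposes two of the three free (4,2)-orbits and swaps the two
   orbits below orb 3; its centraliser is S_2 x S_2. *)

section \<open>The groups G and G'\<close>

lemma gen_perms_comp: "g \<in> gen_perms S \<Longrightarrow> h \<in> gen_perms S \<Longrightarrow> g \<circ> h \<in> gen_perms S"
  by (induction rule: gen_perms.induct) (simp_all add: comp_assoc gen_perms.gen_step)

lemma generator_in_gen_perms: "s \<in> S \<Longrightarrow> s \<in> gen_perms S"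
  using gen_step[OF _ gen_id, of s S] by simp

lemma gen_perms_mono:
  assumes "S \<subseteq> S'" shows "gen_perms S \<subseteq> gen_perms S'"
proof
  show "g \<in> gen_perms S'" if "g \<in> gen_perms S" for g
    using that assms by induction (auto intro: gen_perms.intros)
qed

lemma gen_perms_least:
  assumes "id \<in> H" and "\<And>s h. s \<in> S \<Longrightarrow> h \<in> H \<Longrightarrow> s \<circ> h \<in> H"
  shows "gen_perms S \<subseteq> H"
proof
  show "g \<in> H" if "g \<in> gen_perms S" for g
    using that assms by induction auto
qed

lemma bij_gen_perms:
  assumes "\<And>s. s \<in> S \<Longrightarrow> bij s" and "g \<in> gen_perms S" shows "bij g"
  using assms(2) by induction (use bij_id bij_comp assms(1) in blast)+

lemma gen_perms_comp_right_image:
  assumes "finite (gen_perms S)" and "\<And>s. s \<in> S \<Longrightarrow> bij s" and "g \<in> gen_perms S"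
  shows "(\<lambda>h. h \<circ> g) ` gen_perms S = gen_perms S"
proof (rule endo_inj_surj)
  show "(\<lambda>h. h \<circ> g) ` gen_perms S \<subseteq> gen_perms S"
    using assms(3) gen_perms_comp by blast
  show "inj_on (\<lambda>h. h \<circ> g) (gen_perms S)"
    using bij_gen_perms[OF assms(2,3)] by (auto intro!: inj_onI simp: bij_def surj_fun_eq)
qed (rule assms(1))

definition perm_of_list :: "nat list \<Rightarrow> nat \<Rightarrow> nat" where
  "perm_of_list xs x =
     (if x = 1 then xs ! 0 else if x = 2 then xs ! 1 else if x = 3 then xs ! 2
      else if x = 4 then xs ! 3 else if x = 5 then xs ! 4 else if x = 6 then xs ! 5 else x)"

lemma perm_of_list_comp:
  "length ys = 6 \<Longrightarrow> perm_of_list xs \<circ> perm_of_list ys = perm_of_list (map (perm_of_list xs) ys)"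
  by (auto simp: perm_of_list_def fun_eq_iff)

lemma perm_of_list_id: "perm_of_list [1,2,3,4,5,6] = id"
  by (auto simp: perm_of_list_def fun_eq_iff)

lemma generators_as_lists:
  "transpose 1 3 \<circ> transpose 3 5 \<circ> transpose 2 4 \<circ> transpose 4 6 = perm_of_list [3,4,5,6,1,2]"
  "transpose 1 4 \<circ> transpose 2 3 \<circ> transpose 5 6 = perm_of_list [4,3,2,1,6,5]"
  "transpose 1 2 \<circ> transpose 3 4 \<circ> transpose 5 6 = perm_of_list [2,1,4,3,6,5]"
  by (auto simp: perm_of_list_def transpose_def fun_eq_iff)

lemma gen_perms_subset_of_lists:
  assumes "[1,2,3,4,5,6] \<in> set L" and "\<forall>a\<in>set L. length a = 6"
    and "\<forall>s\<in>set gens. \<forall>a\<in>set L. map (perm_of_list s) a \<in> set L"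
  shows "gen_perms (perm_of_list ` set gens) \<subseteq> perm_of_list ` set L"
proof (rule gen_perms_least)
  show "id \<in> perm_of_list ` set L"
    using assms(1) perm_of_list_id by force
  show "s \<circ> h \<in> perm_of_list ` set L"
    if "s \<in> perm_of_list ` set gens" "h \<in> perm_of_list ` set L" for s h
    using that assms(2,3) perm_of_list_comp by force
qed

definition G_list :: "nat list list" where
  "G_list = [[1,2,3,4,5,6], [3,4,5,6,1,2], [5,6,1,2,3,4], [4,3,2,1,6,5], [6,5,4,3,2,1], [2,1,6,5,4,3]]"

definition t_perm :: "nat \<Rightarrow> nat" where
  "t_perm = perm_of_list [2,1,4,3,6,5]"

lemma G_ex_eq: "G_ex = perm_of_list ` set G_list"
proof
  show "G_ex \<subseteq> perm_of_list ` set G_list"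
    using gen_perms_subset_of_lists[of G_list "[[3,4,5,6,1,2], [4,3,2,1,6,5]]"]
    unfolding G_ex_def generators_as_lists by (simp add: G_list_def perm_of_list_def)
  let ?r = "perm_of_list [3,4,5,6,1,2]" and ?s = "perm_of_list [4,3,2,1,6,5]"
  have "?r \<in> G_ex" "?s \<in> G_ex"
    unfolding G_ex_def generators_as_lists by (simp_all add: generator_in_gen_perms)
  then have "{id, ?r, ?r \<circ> ?r, ?s, ?r \<circ> ?s, ?r \<circ> (?r \<circ> ?s)} \<subseteq> G_ex"
    unfolding G_ex_def by (auto intro: gen_perms_comp gen_id)
  then show "perm_of_list ` set G_list \<subseteq> G_ex"
    by (simp add: G_list_def perm_of_list_comp perm_of_list_id[symmetric] perm_of_list_def)
qed

lemma t_perm_conj_G_ex: "g \<in> G_ex \<Longrightarrow> t_perm \<circ> g \<circ> t_perm \<in> G_ex"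
  by (auto simp: G_ex_eq G_list_def t_perm_def perm_of_list_comp perm_of_list_def)

lemma t_perm_involution: "t_perm \<circ> t_perm = id"
  by (simp add: t_perm_def perm_of_list_comp perm_of_list_id[symmetric] perm_of_list_def)

lemma t_perm_notin_G_ex: "t_perm \<notin> G_ex"
proof
  assume "t_perm \<in> G_ex"
  then obtain a where "a \<in> set G_list" "map t_perm [1,2,3,4,5,6] = map (perm_of_list a) [1,2,3,4,5,6]"
    unfolding G_ex_eq by auto
  then show False
    by (auto simp: G_list_def t_perm_def perm_of_list_def)
qed

lemma id_in_G_ex: "id \<in> G_ex"
  unfolding G_ex_def by (rule gen_id)

lemma G_ex_comp: "g \<in> G_ex \<Longrightarrow> h \<in> G_ex \<Longrightarrow> g \<circ> h \<in> G_ex"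
  unfolding G_ex_def by (rule gen_perms_comp)

lemma G_ex_coset_closed:
  assumes "s \<in> insert t_perm G_ex" and "h \<in> G_ex \<union> (\<lambda>g. g \<circ> t_perm) ` G_ex"
  shows "s \<circ> h \<in> G_ex \<union> (\<lambda>g. g \<circ> t_perm) ` G_ex"
  using assms(2)
proof
  assume h: "h \<in> G_ex"
  from assms(1) show ?thesis
  proof
    assume "s = t_perm"
    then have "s \<circ> h = (t_perm \<circ> h \<circ> t_perm) \<circ> t_perm"
      by (simp add: comp_assoc t_perm_involution)
    then show ?thesis
      using t_perm_conj_G_ex[OF h] by blast
  qed (use h G_ex_comp in blast)
next
  assume "h \<in> (\<lambda>g. g \<circ> t_perm) ` G_ex"
  then obtain g where g: "g \<in> G_ex" and h: "h = g \<circ> t_perm"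
    by blast
  from assms(1) show ?thesis
  proof
    assume "s = t_perm"
    then show ?thesis
      using t_perm_conj_G_ex[OF g] by (simp add: h comp_assoc)
  next
    assume "s \<in> G_ex"
    then have "s \<circ> h = (s \<circ> g) \<circ> t_perm" and "s \<circ> g \<in> G_ex"
      using g G_ex_comp by (simp_all add: h comp_assoc)
    then show ?thesis
      by blast
  qed
qed

lemma G'_ex_eq: "G'_ex = G_ex \<union> (\<lambda>g. g \<circ> t_perm) ` G_ex"
proof
  have G_gens: "G_ex = gen_perms (perm_of_list ` {[3,4,5,6,1,2], [4,3,2,1,6,5]})"
    unfolding G_ex_def generators_as_lists by simp
  have G'_gens: "G'_ex = gen_perms (insert t_perm (perm_of_list ` {[3,4,5,6,1,2], [4,3,2,1,6,5]}))"
    unfolding G'_ex_def generators_as_lists t_perm_def by (simp add: insert_commute)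
  have "G_ex \<subseteq> G'_ex"
    unfolding G'_gens G_gens by (rule gen_perms_mono) auto
  moreover have "t_perm \<in> G'_ex"
    unfolding G'_gens by (rule generator_in_gen_perms) simp
  ultimately show "G_ex \<union> (\<lambda>g. g \<circ> t_perm) ` G_ex \<subseteq> G'_ex"
    using gen_perms_comp unfolding G'_ex_def by blast
  have "insert t_perm (perm_of_list ` {[3,4,5,6,1,2], [4,3,2,1,6,5]}) \<subseteq> insert t_perm G_ex"
    unfolding G_gens by (auto intro: generator_in_gen_perms)
  then show "G'_ex \<subseteq> G_ex \<union> (\<lambda>g. g \<circ> t_perm) ` G_ex"
    unfolding G'_gens using G_ex_coset_closed id_in_G_ex by (intro gen_perms_least) auto
qed

lemma finite_G_ex: "finite G_ex"
  by (simp add: G_ex_eq)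

lemma G_ex_comp_right_image:
  assumes "g \<in> G_ex" shows "(\<lambda>h. h \<circ> g) ` G_ex = G_ex"
  using finite_G_ex assms unfolding G_ex_def
  by (intro gen_perms_comp_right_image) (auto intro!: bij_comp)


section \<open>Tabloids and their G-orbits\<close>

definition card_subsets :: "nat \<Rightarrow> nat set list" where
  "card_subsets k = filter (\<lambda>S. card S = k) (map set (subseqs [1..<7]))"

fun tabloid_list :: "nat list \<Rightarrow> tabloid list" where
  "tabloid_list [] = [[]]"
| "tabloid_list (k # lam) = concat (map (\<lambda>S. map ((#) S)
      (filter (\<lambda>A. \<forall>T\<in>set A. S \<inter> T = {}) (tabloid_list lam))) (card_subsets k))"

lemma set_card_subsets: "set (card_subsets k) = {S. S \<subseteq> {1..6} \<and> card S = k}"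
proof -
  have "{1..<7} = {1..6::nat}"
    by auto
  then have "set ` set (subseqs [1..<7]) = Pow {1..6::nat}"
    using subseqs_powset[of "[1..<7::nat]"] by (simp only: set_upt)
  then show ?thesis
    unfolding card_subsets_def by auto
qed

lemma tabloids_Nil: "tabloids [] = {[]}"
  by (auto simp: tabloids_def)

lemma Cons_in_tabloids_iff:
  "S # A \<in> tabloids (k # lam) \<longleftrightarrow>
     S \<subseteq> {1..6} \<and> card S = k \<and> A \<in> tabloids lam \<and> (\<forall>T\<in>set A. S \<inter> T = {})"
proof -
  have "(\<forall>i<Suc (length A). \<forall>j<Suc (length A). i \<noteq> j \<longrightarrow> (S # A) ! i \<inter> (S # A) ! j = {})
     \<longleftrightarrow> (\<forall>j<length A. S \<inter> A ! j = {}) \<and> (\<forall>i<length A. \<forall>j<length A. i \<noteq> j \<longrightarrow> A ! i \<inter> A ! j = {})"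
    by (simp only: All_less_Suc2 nth_Cons_0 nth_Cons_Suc) (simp add: Int_commute, blast)
  then show ?thesis
    unfolding tabloids_def by (auto simp: All_less_Suc2 all_set_conv_all_nth)
qed

lemma set_tabloid_list: "set (tabloid_list lam) = tabloids lam"
proof (induction lam)
  case Nil
  then show ?case by (simp add: tabloids_Nil)
next
  case (Cons k lam)
  show ?case
  proof
    show "set (tabloid_list (k # lam)) \<subseteq> tabloids (k # lam)"
      using Cons by (auto simp: set_card_subsets Cons_in_tabloids_iff)
    show "tabloids (k # lam) \<subseteq> set (tabloid_list (k # lam))"
    proof
      fix A
      assume A: "A \<in> tabloids (k # lam)"
      then obtain S A' where "A = S # A'"
        by (cases A) (auto simp: tabloids_def)
      then show "A \<in> set (tabloid_list (k # lam))"
        using A Cons by (auto simp: set_card_subsets Cons_in_tabloids_iff)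
    qed
  qed
qed

definition tab_le_upto :: "tabloid \<Rightarrow> tabloid \<Rightarrow> bool" where
  "tab_le_upto A B \<longleftrightarrow>
     (\<forall>i\<in>set [1..<Suc (max (length A) (length B))]. rows_upto A i \<subseteq> rows_upto B i)"

lemma tab_le_iff_upto: "tab_le A B \<longleftrightarrow> tab_le_upto A B"
proof
  show "tab_le A B \<Longrightarrow> tab_le_upto A B"
    by (auto simp: tab_le_def tab_le_upto_def)
next
  let ?m = "max (length A) (length B)"
  assume bounded: "tab_le_upto A B"
  have at_m: "rows_upto A ?m \<subseteq> rows_upto B ?m"
    using bounded by (cases "?m = 0") (auto simp: tab_le_upto_def rows_upto_def)
  show "tab_le A B"
    unfolding tab_le_def
  proof (intro allI impI)
    fix i :: nat
    assume "1 \<le> i"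
    show "rows_upto A i \<subseteq> rows_upto B i"
    proof (cases "i \<le> ?m")
      case True
      then have "i \<in> set [1..<Suc ?m]"
        using \<open>1 \<le> i\<close> by (simp only: set_upt) simp
      then show ?thesis
        using bounded unfolding tab_le_upto_def by blast
    next
      case False
      then have "rows_upto A i = rows_upto A ?m" "rows_upto B i = rows_upto B ?m"
        by (simp_all add: rows_upto_def)
      then show ?thesis
        using at_m by simp
    qed
  qed
qed

lemma tab_act_comp: "tab_act g (tab_act h A) = tab_act (g \<circ> h) A"
  by (simp add: tab_act_def image_comp)

lemma orbit_tab_self: "id \<in> G \<Longrightarrow> A \<in> orbit_tab G A"
  unfolding orbit_tab_def by (rule image_eqI[of _ _ id]) (simp_all add: tab_act_def)

lemma orbit_tab_act:
  assumes "(\<lambda>h. h \<circ> g) ` G = G"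
  shows "orbit_tab G (tab_act g A) = orbit_tab G A"
proof -
  have "orbit_tab G (tab_act g A) = (\<lambda>h. tab_act h A) ` (\<lambda>h. h \<circ> g) ` G"
    unfolding orbit_tab_def by (simp add: tab_act_comp image_image)
  then show ?thesis
    unfolding assms orbit_tab_def .
qed

definition orbit_reps :: "tabloid list" where
  "orbit_reps =
    [[{1,2,3,4,5,6}],
     [{1,2,3,4,5}, {6}],
     [{1,2,3,4}, {5,6}], [{1,2,3,5}, {4,6}], [{1,2,3,6}, {4,5}], [{1,2,4,5}, {3,6}],
     [{1,2,3,4}, {5}, {6}], [{1,2,3,5}, {4}, {6}], [{1,2,3,5}, {6}, {4}], [{1,2,3,6}, {4}, {5}],
     [{1,2,4,5}, {3}, {6}],
     [{1,2,3}, {4,5,6}], [{1,2,4}, {3,5,6}], [{1,3,5}, {2,4,6}], [{1,3,6}, {2,4,5}]]"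

definition orb :: "nat \<Rightarrow> tabloid set" where
  "orb i = orbit_tab G_ex (orbit_reps ! i)"

definition orb_ups :: "nat list list" where
  "orb_ups = [[0], [0,1], [0,1,2], [0,1,3], [0,1,4], [0,1,5],
     [0,1,2,6], [0,1,3,7], [0,1,3,8], [0,1,4,9], [0,1,5,10],
     [0,1,2,3,4,11], [0,1,2,3,5,12], [0,1,3,13], [0,1,3,4,5,14]]"

definition t_index :: "nat list" where
  "t_index = [0, 1, 2, 3, 5, 4, 6, 8, 7, 10, 9, 12, 11, 13, 14]"

lemma orbits_shape_G_ex:
  "orbits_shape G_ex [6] = orb ` {0}"
  "orbits_shape G_ex [5,1] = orb ` {1}"
  "orbits_shape G_ex [4,2] = orb ` {2,3,4,5}"
  "orbits_shape G_ex [4,1,1] = orb ` {6,7,8,9,10}"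
  "orbits_shape G_ex [3,3] = orb ` {11,12,13,14}"
  unfolding orbits_shape_def set_tabloid_list[symmetric] orb_def G_ex_eq orbit_reps_def G_list_def
  by code_simp+

lemma distinct_orbs: "distinct (map orb [0..<15])"
  unfolding orb_def G_ex_eq orbit_reps_def G_list_def
  by code_simp

lemma orb_le_orb_table:
  "\<forall>i\<in>set [0..<15]. \<forall>j\<in>set [0..<15]. orb_le (orb i) (orb j) \<longleftrightarrow> j \<in> set (orb_ups ! i)"
  unfolding orb_def G_ex_eq orbit_reps_def G_list_def orb_ups_def orb_le_def tab_le_iff_upto
  by code_simp

lemma t_perm_orbit_reps:
  "\<forall>k\<in>set [0..<15]. orbit_tab G_ex (tab_act t_perm (orbit_reps ! k)) = orb (t_index ! k)"
  unfolding orb_def G_ex_eq orbit_reps_def G_list_def t_index_def t_perm_def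
  by code_simp


section \<open>Automorphisms as permutations of orbit indices\<close>

definition reindex :: "(nat \<Rightarrow> 'a) \<Rightarrow> nat \<Rightarrow> (nat \<Rightarrow> nat) \<Rightarrow> 'a \<Rightarrow> 'a" where
  "reindex e n \<sigma> x = (if x \<in> e ` {..<n} then e (\<sigma> (inv_into {..<n} e x)) else x)"

lemma reindex_apply: "inj_on e {..<n} \<Longrightarrow> i < n \<Longrightarrow> reindex e n \<sigma> (e i) = e (\<sigma> i)"
  by (simp add: reindex_def)

lemma reindex_outside: "x \<notin> e ` {..<n} \<Longrightarrow> reindex e n \<sigma> x = x"
  by (simp add: reindex_def)

lemma reindex_cong:
  assumes "\<And>i. i < n \<Longrightarrow> \<sigma> i = \<sigma>' i" shows "reindex e n \<sigma> = reindex e n \<sigma>'"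
proof
  fix x
  show "reindex e n \<sigma> x = reindex e n \<sigma>' x"
    using assms inv_into_into[of x e "{..<n}"] by (simp add: reindex_def)
qed

lemma reindex_image: "inj_on e {..<n} \<Longrightarrow> C \<subseteq> {..<n} \<Longrightarrow> reindex e n \<sigma> ` e ` C = e ` \<sigma> ` C"
  by (force simp: reindex_apply image_iff)

lemma reindex_comp:
  assumes "inj_on e {..<n}" and "\<And>i. i < n \<Longrightarrow> \<sigma>' i < n"
  shows "reindex e n \<sigma> \<circ> reindex e n \<sigma>' = reindex e n (\<sigma> \<circ> \<sigma>')"
proof
  fix x
  show "(reindex e n \<sigma> \<circ> reindex e n \<sigma>') x = reindex e n (\<sigma> \<circ> \<sigma>') x"
    by (cases "x \<in> e ` {..<n}") (auto simp: reindex_apply reindex_outside assms)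
qed

lemma reindex_eqD:
  assumes "inj_on e {..<n}" and "reindex e n \<sigma> = reindex e n \<sigma>'"
    and "i < n" and "\<sigma> i < n" and "\<sigma>' i < n"
  shows "\<sigma> i = \<sigma>' i"
proof -
  have "e (\<sigma> i) = e (\<sigma>' i)"
    using assms(2) reindex_apply[OF assms(1,3)] by metis
  then show ?thesis
    using assms(1,4,5) by (auto dest: inj_onD)
qed

lemma inj_on_reindex:
  assumes e: "inj_on e {..<n}" and \<sigma>: "inj_on \<sigma> {..<n}" and less: "\<And>i. i < n \<Longrightarrow> \<sigma> i < n"
  shows "inj_on (reindex e n \<sigma>) (e ` {..<n})"
proof (rule inj_onI)
  fix x y
  assume "x \<in> e ` {..<n}" "y \<in> e ` {..<n}" "reindex e n \<sigma> x = reindex e n \<sigma> y"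
  then obtain i j where i: "i < n" and j: "j < n" and xy: "x = e i" "y = e j"
    and eq: "e (\<sigma> i) = e (\<sigma> j)"
    by (auto simp: reindex_apply e)
  have "\<sigma> i = \<sigma> j"
    using eq by (rule inj_onD[OF e]) (simp_all add: less i j)
  then have "i = j"
    by (rule inj_onD[OF \<sigma>]) (simp_all add: i j)
  then show "x = y"
    using xy by simp
qed

lemma eq_reindex:
  assumes "inj_on e {..<n}" and "al ` e ` {..<n} \<subseteq> e ` {..<n}"
    and "\<And>x. x \<notin> e ` {..<n} \<Longrightarrow> al x = x"
  shows "al = reindex e n (\<lambda>i. inv_into {..<n} e (al (e i)))"
proof
  fix x
  show "al x = reindex e n (\<lambda>i. inv_into {..<n} e (al (e i))) x"
  proof (cases "x \<in> e ` {..<n}")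
    case True
    then obtain i where "i < n" "x = e i" by auto
    moreover have "al (e i) \<in> e ` {..<n}"
      using assms(2) \<open>i < n\<close> by blast
    ultimately show ?thesis
      using assms(1) by (simp add: reindex_apply f_inv_into_f)
  qed (simp add: assms(3) reindex_outside)
qed

lemma bij_betw_imp_reindex:
  assumes e: "inj_on e {..<n}" and bij: "bij_betw al (e ` {..<n}) (e ` {..<n})"
    and outside: "\<And>x. x \<notin> e ` {..<n} \<Longrightarrow> al x = x"
  obtains \<sigma> where "inj_on \<sigma> {..<n}" and "\<And>i. i < n \<Longrightarrow> \<sigma> i < n" and "al = reindex e n \<sigma>"
proof -
  define \<sigma> where "\<sigma> i = inv_into {..<n} e (al (e i))" for i
  have al_eq: "al = reindex e n \<sigma>"
    unfolding \<sigma>_def by (rule eq_reindex[OF e _ outside]) (use bij in \<open>simp add: bij_betw_def\<close>)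
  have \<sigma>_less: "\<sigma> i < n" if "i < n" for i
  proof -
    have "al (e i) \<in> e ` {..<n}"
      using bij_betwE[OF bij] that by simp
    then show ?thesis
      unfolding \<sigma>_def using inv_into_into by (metis lessThan_iff)
  qed
  have "inj_on \<sigma> {..<n}"
  proof (rule inj_onI)
    fix i j
    assume i: "i \<in> {..<n}" and j: "j \<in> {..<n}" and eq: "\<sigma> i = \<sigma> j"
    have "al (e i) = al (e j)"
      using i j eq by (simp add: al_eq reindex_apply[OF e])
    then have "e i = e j"
      by (rule inj_onD[OF bij_betw_imp_inj_on[OF bij]]) (use i j in simp_all)
    then show "i = j"
      using i j by (rule inj_onD[OF e])
  qed
  then show thesis
    using that \<sigma>_less al_eq by blast
qed

lemma inj_on_orb: "inj_on orb {..<15}"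
  using distinct_orbs by (simp add: distinct_map lessThan_atLeast0 atLeast_upt)

lemma orb_eq_iff: "i < 15 \<Longrightarrow> j < 15 \<Longrightarrow> orb i = orb j \<longleftrightarrow> i = j"
  using inj_on_eq_iff[OF inj_on_orb] by simp

definition index_blocks :: "nat set set" where
  "index_blocks = {{0}, {1}, {2,3,4,5}, {6,7,8,9,10}, {11,12,13,14}}"

lemma orbits_shape_D_ex: "orbits_shape G_ex ` D_ex = (\<lambda>C. orb ` C) ` index_blocks"
  unfolding D_ex_def index_blocks_def image_insert image_empty orbits_shape_G_ex ..

lemma Union_index_blocks: "\<Union> index_blocks = {..<15}"
  by (auto simp: index_blocks_def lessThan_nat_numeral)

lemma index_blocks_subset: "C \<in> index_blocks \<Longrightarrow> C \<subseteq> {..<15}"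
  using Union_index_blocks by blast

lemma orbits_D_G_ex_D_ex: "orbits_D G_ex D_ex = orb ` {..<15}"
  unfolding orbits_D_def orbits_shape_D_ex Union_index_blocks[symmetric] by blast

definition idx_le :: "nat \<Rightarrow> nat \<Rightarrow> bool" where
  "idx_le i j \<longleftrightarrow> j \<in> set (orb_ups ! i)"

lemma orb_le_orb: "i < 15 \<Longrightarrow> j < 15 \<Longrightarrow> orb_le (orb i) (orb j) \<longleftrightarrow> idx_le i j"
  using orb_le_orb_table by (simp add: idx_le_def)

definition index_aut :: "(nat \<Rightarrow> nat) \<Rightarrow> bool" where
  "index_aut \<sigma> \<longleftrightarrow> inj_on \<sigma> {..<15} \<and> (\<forall>C\<in>index_blocks. \<sigma> ` C = C)
     \<and> (\<forall>i<15. \<forall>j<15. idx_le (\<sigma> i) (\<sigma> j) \<longleftrightarrow> idx_le i j)"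

lemma index_aut_image:
  assumes "index_aut \<sigma>" shows "\<sigma> ` {..<15} = {..<15}"
proof -
  have "(`) \<sigma> ` index_blocks = id ` index_blocks"
    by (rule image_cong) (use assms in \<open>simp_all add: index_aut_def\<close>)
  then have "\<sigma> ` \<Union> index_blocks = \<Union> index_blocks"
    by (simp add: image_Union)
  then show ?thesis
    by (simp add: Union_index_blocks)
qed

lemma index_aut_less: "index_aut \<sigma> \<Longrightarrow> i < 15 \<Longrightarrow> \<sigma> i < 15"
  using index_aut_image by blast

lemma mem_Aut0_set_G_ex_D_ex:
  "al \<in> Aut0_set G_ex D_ex \<longleftrightarrow> bij_betw al (orb ` {..<15}) (orb ` {..<15})
     \<and> (\<forall>i\<in>{..<15}. \<forall>j\<in>{..<15}. orb_le (al (orb i)) (al (orb j)) \<longleftrightarrow> orb_le (orb i) (orb j))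
     \<and> (\<forall>C\<in>index_blocks. al ` orb ` C = orb ` C)
     \<and> (\<forall>x. x \<notin> orb ` {..<15} \<longrightarrow> al x = x)"
proof -
  have "(\<forall>mu\<in>D_ex. al ` orbits_shape G_ex mu = orbits_shape G_ex mu)
      \<longleftrightarrow> (\<forall>S\<in>orbits_shape G_ex ` D_ex. al ` S = S)"
    by (rule ball_simps(9)[symmetric])
  also have "\<dots> \<longleftrightarrow> (\<forall>C\<in>index_blocks. al ` orb ` C = orb ` C)"
    unfolding orbits_shape_D_ex by (rule ball_simps(9))
  finally have shapes_iff: "(\<forall>mu\<in>D_ex. al ` orbits_shape G_ex mu = orbits_shape G_ex mu)
      \<longleftrightarrow> (\<forall>C\<in>index_blocks. al ` orb ` C = orb ` C)" .
  show ?thesis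
    unfolding Aut0_set_def mem_Collect_eq orbits_D_G_ex_D_ex shapes_iff ball_simps(9) ..
qed

lemma index_autD:
  assumes "index_aut \<sigma>"
  shows "inj_on \<sigma> {..<15}" and "\<And>C. C \<in> index_blocks \<Longrightarrow> \<sigma> ` C = C"
    and "\<And>i j. i < 15 \<Longrightarrow> j < 15 \<Longrightarrow> idx_le (\<sigma> i) (\<sigma> j) \<longleftrightarrow> idx_le i j"
  using assms unfolding index_aut_def by blast+

lemma Aut0_set_imp_reindex:
  assumes "al \<in> Aut0_set G_ex D_ex"
  obtains \<sigma> where "index_aut \<sigma>" and "al = reindex orb 15 \<sigma>"
proof -
  have bij: "bij_betw al (orb ` {..<15}) (orb ` {..<15})"
    and order: "\<And>i j. i < 15 \<Longrightarrow> j < 15 \<Longrightarrow> orb_le (al (orb i)) (al (orb j)) \<longleftrightarrow> orb_le (orb i) (orb j)"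
    and shapes: "\<And>C. C \<in> index_blocks \<Longrightarrow> al ` orb ` C = orb ` C"
    and outside: "\<And>x. x \<notin> orb ` {..<15} \<Longrightarrow> al x = x"
    using assms[unfolded mem_Aut0_set_G_ex_D_ex] by simp_all
  obtain \<sigma> where inj: "inj_on \<sigma> {..<15}" and \<sigma>_less: "\<And>i. i < 15 \<Longrightarrow> \<sigma> i < 15"
    and al_eq: "al = reindex orb 15 \<sigma>"
    using bij_betw_imp_reindex[OF inj_on_orb bij outside] by blast
  have al_orb: "al (orb i) = orb (\<sigma> i)" if "i < 15" for i
    by (simp only: al_eq reindex_apply[OF inj_on_orb that])
  have blocks: "\<sigma> ` C = C" if "C \<in> index_blocks" for C
  proof -
    have C: "C \<subseteq> {..<15}"
      using index_blocks_subset[OF that] .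
    have "orb ` \<sigma> ` C = al ` orb ` C"
      unfolding image_image using C al_orb by (intro image_cong) auto
    then have "orb ` \<sigma> ` C = orb ` C"
      using shapes[OF that] by simp
    moreover have "\<sigma> ` C \<subseteq> {..<15}"
      using C \<sigma>_less by blast
    ultimately show ?thesis
      using C by (simp add: inj_on_image_eq_iff[OF inj_on_orb])
  qed
  have order_idx: "idx_le (\<sigma> i) (\<sigma> j) \<longleftrightarrow> idx_le i j" if "i < 15" "j < 15" for i j
    using order[OF that] that al_orb \<sigma>_less by (simp add: orb_le_orb)
  have "index_aut \<sigma>"
    unfolding index_aut_def using inj blocks order_idx by simp
  then show thesis
    using al_eq that by blast
qed

lemma reindex_in_Aut0_set:
  assumes "index_aut \<sigma>"
  shows "reindex orb 15 \<sigma> \<in> Aut0_set G_ex D_ex"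
proof -
  note \<sigma>_props = index_autD[OF assms] and \<sigma>_less = index_aut_less[OF assms]
  have "inj_on (reindex orb 15 \<sigma>) (orb ` {..<15})"
    using inj_on_reindex[OF inj_on_orb \<sigma>_props(1)] \<sigma>_less by blast
  moreover have "reindex orb 15 \<sigma> ` orb ` {..<15} = orb ` {..<15}"
    by (simp add: reindex_image inj_on_orb index_aut_image[OF assms])
  moreover have "reindex orb 15 \<sigma> ` orb ` C = orb ` C" if "C \<in> index_blocks" for C
    using that by (simp add: reindex_image inj_on_orb index_blocks_subset \<sigma>_props(2))
  moreover have "orb_le (reindex orb 15 \<sigma> (orb i)) (reindex orb 15 \<sigma> (orb j)) \<longleftrightarrow> orb_le (orb i) (orb j)"
    if "i < 15" "j < 15" for i j
    using that \<sigma>_less \<sigma>_props(3) by (simp add: reindex_apply inj_on_orb orb_le_orb)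
  ultimately show ?thesis
    unfolding mem_Aut0_set_G_ex_D_ex bij_betw_def by (simp add: reindex_outside)
qed

lemma index_aut_mem_block: "index_aut \<sigma> \<Longrightarrow> C \<in> index_blocks \<Longrightarrow> i \<in> C \<Longrightarrow> \<sigma> i \<in> C"
  using index_autD(2) by blast

lemma index_aut_neq:
  assumes "index_aut \<sigma>" and "i < 15" and "j < 15" and "i \<noteq> j" shows "\<sigma> i \<noteq> \<sigma> j"
  using inj_on_eq_iff[OF index_autD(1)[OF assms(1)]] assms(2-4) by simp

lemma index_aut_blocks:
  assumes "index_aut \<sigma>"
  shows "\<sigma> 0 = 0" "\<sigma> 1 = 1"
    "\<sigma> 2 \<in> {2,3,4,5}" "\<sigma> 3 \<in> {2,3,4,5}" "\<sigma> 4 \<in> {2,3,4,5}" "\<sigma> 5 \<in> {2,3,4,5}"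
    "\<sigma> 6 \<in> {6,7,8,9,10}" "\<sigma> 7 \<in> {6,7,8,9,10}" "\<sigma> 8 \<in> {6,7,8,9,10}"
    "\<sigma> 9 \<in> {6,7,8,9,10}" "\<sigma> 10 \<in> {6,7,8,9,10}"
    "\<sigma> 11 \<in> {11,12,13,14}" "\<sigma> 12 \<in> {11,12,13,14}" "\<sigma> 13 \<in> {11,12,13,14}"
    "\<sigma> 14 \<in> {11,12,13,14}"
  using index_aut_mem_block[OF assms, of "{0}"] index_aut_mem_block[OF assms, of "{1}"]
    index_aut_mem_block[OF assms, of "{2,3,4,5}"] index_aut_mem_block[OF assms, of "{6,7,8,9,10}"]
    index_aut_mem_block[OF assms, of "{11,12,13,14}"]
  by (simp_all add: index_blocks_def)

lemma index_aut_fixes_3: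
  assumes "index_aut \<sigma>"
  shows "\<sigma> 3 = 3" and "\<sigma> 7 \<in> {7,8}" and "\<sigma> 8 \<in> {7,8}" and "\<sigma> 7 \<noteq> \<sigma> 8"
proof -
  note blocks = index_aut_blocks(4,8,9)[OF assms]
  show "\<sigma> 7 \<noteq> \<sigma> 8"
    by (rule index_aut_neq[OF assms]) simp_all
  moreover have "idx_le (\<sigma> 7) (\<sigma> 3)" "idx_le (\<sigma> 8) (\<sigma> 3)"
    using index_autD(3)[OF assms, of 7 3] index_autD(3)[OF assms, of 8 3]
    by (simp_all add: idx_le_def orb_ups_def)
  ultimately show "\<sigma> 3 = 3"
    using blocks by (auto simp: idx_le_def orb_ups_def)
  then show "\<sigma> 7 \<in> {7,8}" "\<sigma> 8 \<in> {7,8}"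
    using blocks \<open>idx_le (\<sigma> 7) (\<sigma> 3)\<close> \<open>idx_le (\<sigma> 8) (\<sigma> 3)\<close>
    by (auto simp: idx_le_def orb_ups_def)
qed

lemma index_aut_permutes_245:
  assumes \<sigma>: "index_aut \<sigma>"
  shows "\<sigma> 2 \<in> {2,4,5}" "\<sigma> 4 \<in> {2,4,5}" "\<sigma> 5 \<in> {2,4,5}"
    and "\<sigma> 2 \<noteq> \<sigma> 4" "\<sigma> 2 \<noteq> \<sigma> 5" "\<sigma> 4 \<noteq> \<sigma> 5"
proof -
  have "\<sigma> 2 \<noteq> 3" "\<sigma> 4 \<noteq> 3" "\<sigma> 5 \<noteq> 3"
    using index_aut_neq[OF \<sigma>, of 2 3] index_aut_neq[OF \<sigma>, of 4 3] index_aut_neq[OF \<sigma>, of 5 3]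
      index_aut_fixes_3(1)[OF \<sigma>] by simp_all
  then show "\<sigma> 2 \<in> {2,4,5}" "\<sigma> 4 \<in> {2,4,5}" "\<sigma> 5 \<in> {2,4,5}"
    using index_aut_blocks(3,5,6)[OF \<sigma>] by auto
  show "\<sigma> 2 \<noteq> \<sigma> 4" "\<sigma> 2 \<noteq> \<sigma> 5" "\<sigma> 4 \<noteq> \<sigma> 5"
    by (rule index_aut_neq[OF \<sigma>]; simp)+
qed

lemma index_aut_idx_le:
  assumes "index_aut \<sigma>"
  shows "idx_le (\<sigma> 6) (\<sigma> 2)" "idx_le (\<sigma> 9) (\<sigma> 4)" "idx_le (\<sigma> 10) (\<sigma> 5)"
    "idx_le (\<sigma> 11) (\<sigma> 2)" "idx_le (\<sigma> 11) (\<sigma> 4)" "\<not> idx_le (\<sigma> 11) (\<sigma> 5)"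
    "idx_le (\<sigma> 12) (\<sigma> 2)" "idx_le (\<sigma> 12) (\<sigma> 5)" "\<not> idx_le (\<sigma> 12) (\<sigma> 4)"
    "idx_le (\<sigma> 14) (\<sigma> 4)" "idx_le (\<sigma> 14) (\<sigma> 5)" "\<not> idx_le (\<sigma> 14) (\<sigma> 2)"
    "\<not> idx_le (\<sigma> 13) (\<sigma> 2)" "\<not> idx_le (\<sigma> 13) (\<sigma> 4)" "\<not> idx_le (\<sigma> 13) (\<sigma> 5)"
proof -
  have "idx_le 6 2" "idx_le 9 4" "idx_le 10 5"
    "idx_le 11 2" "idx_le 11 4" "\<not> idx_le 11 5" "idx_le 12 2" "idx_le 12 5" "\<not> idx_le 12 4"
    "idx_le 14 4" "idx_le 14 5" "\<not> idx_le 14 2" "\<not> idx_le 13 2" "\<not> idx_le 13 4" "\<not> idx_le 13 5"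
    by (simp_all add: idx_le_def orb_ups_def)
  then show "idx_le (\<sigma> 6) (\<sigma> 2)" "idx_le (\<sigma> 9) (\<sigma> 4)" "idx_le (\<sigma> 10) (\<sigma> 5)"
    "idx_le (\<sigma> 11) (\<sigma> 2)" "idx_le (\<sigma> 11) (\<sigma> 4)" "\<not> idx_le (\<sigma> 11) (\<sigma> 5)"
    "idx_le (\<sigma> 12) (\<sigma> 2)" "idx_le (\<sigma> 12) (\<sigma> 5)" "\<not> idx_le (\<sigma> 12) (\<sigma> 4)"
    "idx_le (\<sigma> 14) (\<sigma> 4)" "idx_le (\<sigma> 14) (\<sigma> 5)" "\<not> idx_le (\<sigma> 14) (\<sigma> 2)"
    "\<not> idx_le (\<sigma> 13) (\<sigma> 2)" "\<not> idx_le (\<sigma> 13) (\<sigma> 4)" "\<not> idx_le (\<sigma> 13) (\<sigma> 5)"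
    by (simp_all add: index_autD(3)[OF assms])
qed

lemma idx_le_unique_411_below_42:
  "x \<in> {6,7,8,9,10} \<Longrightarrow> y \<in> {2,4,5} \<Longrightarrow> idx_le x y \<Longrightarrow> x = (if y = 2 then 6 else if y = 4 then 9 else 10)"
  by (auto simp: idx_le_def orb_ups_def)

lemma idx_le_unique_33_below_two_42:
  "x \<in> {11,12,13,14} \<Longrightarrow> y \<in> {2,4,5} \<Longrightarrow> z \<in> {2,4,5} \<Longrightarrow> w \<in> {2,4,5}
    \<Longrightarrow> y \<noteq> z \<Longrightarrow> y \<noteq> w \<Longrightarrow> z \<noteq> w \<Longrightarrow> idx_le x y \<Longrightarrow> idx_le x z \<Longrightarrow> \<not> idx_le x w
    \<Longrightarrow> x = (if w = 5 then 11 else if w = 4 then 12 else 14)"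
  by (auto simp: idx_le_def orb_ups_def)

lemma idx_le_unique_33_below_no_42:
  "x \<in> {11,12,13,14} \<Longrightarrow> y \<in> {2,4,5} \<Longrightarrow> z \<in> {2,4,5} \<Longrightarrow> w \<in> {2,4,5}
    \<Longrightarrow> y \<noteq> z \<Longrightarrow> y \<noteq> w \<Longrightarrow> z \<noteq> w \<Longrightarrow> \<not> idx_le x y \<Longrightarrow> \<not> idx_le x z \<Longrightarrow> \<not> idx_le x w
    \<Longrightarrow> x = 13"
  by (auto simp: idx_le_def orb_ups_def)

lemma three_distinct_cases:
  assumes "a \<in> {x,y,z}" "b \<in> {x,y,z}" "c \<in> {x,y,z}" "a \<noteq> b" "a \<noteq> c" "b \<noteq> c"
  shows "(a, b, c) \<in> {(x,y,z), (x,z,y), (y,x,z), (y,z,x), (z,x,y), (z,y,x)}"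
  using assms by auto

lemma index_aut_411:
  assumes \<sigma>: "index_aut \<sigma>"
  shows "\<sigma> 6 = (if \<sigma> 2 = 2 then 6 else if \<sigma> 2 = 4 then 9 else 10)"
    "\<sigma> 9 = (if \<sigma> 4 = 2 then 6 else if \<sigma> 4 = 4 then 9 else 10)"
    "\<sigma> 10 = (if \<sigma> 5 = 2 then 6 else if \<sigma> 5 = 4 then 9 else 10)"
  using idx_le_unique_411_below_42[OF index_aut_blocks(7)[OF \<sigma>] index_aut_permutes_245(1)[OF \<sigma>]
      index_aut_idx_le(1)[OF \<sigma>]]
    idx_le_unique_411_below_42[OF index_aut_blocks(10)[OF \<sigma>] index_aut_permutes_245(2)[OF \<sigma>]
      index_aut_idx_le(2)[OF \<sigma>]]
    idx_le_unique_411_below_42[OF index_aut_blocks(11)[OF \<sigma>] index_aut_permutes_245(3)[OF \<sigma>]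
      index_aut_idx_le(3)[OF \<sigma>]] .

lemma index_aut_33:
  assumes \<sigma>: "index_aut \<sigma>"
  shows "\<sigma> 11 = (if \<sigma> 5 = 5 then 11 else if \<sigma> 5 = 4 then 12 else 14)"
    "\<sigma> 12 = (if \<sigma> 4 = 5 then 11 else if \<sigma> 4 = 4 then 12 else 14)"
    "\<sigma> 14 = (if \<sigma> 2 = 5 then 11 else if \<sigma> 2 = 4 then 12 else 14)"
    "\<sigma> 13 = 13"
proof -
  note blocks = index_aut_blocks[OF \<sigma>] and perm = index_aut_permutes_245[OF \<sigma>]
    and le = index_aut_idx_le[OF \<sigma>]
  show "\<sigma> 11 = (if \<sigma> 5 = 5 then 11 else if \<sigma> 5 = 4 then 12 else 14)"
    using idx_le_unique_33_below_two_42[OF blocks(12) perm le(4-6)] .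
  show "\<sigma> 12 = (if \<sigma> 4 = 5 then 11 else if \<sigma> 4 = 4 then 12 else 14)"
    using idx_le_unique_33_below_two_42[OF blocks(13) perm(1,3,2) perm(5,4) perm(6)[symmetric] le(7-9)] .
  show "\<sigma> 14 = (if \<sigma> 2 = 5 then 11 else if \<sigma> 2 = 4 then 12 else 14)"
    using idx_le_unique_33_below_two_42[OF blocks(15) perm(2,3,1) perm(6) perm(4,5)[symmetric] le(10-12)] .
  show "\<sigma> 13 = 13"
    using idx_le_unique_33_below_no_42[OF blocks(14) perm le(13-15)] .
qed

(* The value tables of index_perm p q for the twelve pairs (p, q) in S_3 x S_2. *)
definition aut_indices :: "nat list list" where
  "aut_indices =
    [[0, 1, 2, 3, 4, 5, 6, 7, 8, 9, 10, 11, 12, 13, 14], [0, 1, 2, 3, 4, 5, 6, 8, 7, 9, 10, 11, 12, 13, 14],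
     [0, 1, 2, 3, 5, 4, 6, 7, 8, 10, 9, 12, 11, 13, 14], [0, 1, 2, 3, 5, 4, 6, 8, 7, 10, 9, 12, 11, 13, 14],
     [0, 1, 4, 3, 2, 5, 9, 7, 8, 6, 10, 11, 14, 13, 12], [0, 1, 4, 3, 2, 5, 9, 8, 7, 6, 10, 11, 14, 13, 12],
     [0, 1, 4, 3, 5, 2, 9, 7, 8, 10, 6, 14, 11, 13, 12], [0, 1, 4, 3, 5, 2, 9, 8, 7, 10, 6, 14, 11, 13, 12],
     [0, 1, 5, 3, 2, 4, 10, 7, 8, 6, 9, 12, 14, 13, 11], [0, 1, 5, 3, 2, 4, 10, 8, 7, 6, 9, 12, 14, 13, 11],
     [0, 1, 5, 3, 4, 2, 10, 7, 8, 9, 6, 14, 12, 13, 11], [0, 1, 5, 3, 4, 2, 10, 8, 7, 9, 6, 14, 12, 13, 11]]"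

lemma index_aut_in_aut_indices:
  assumes \<sigma>: "index_aut \<sigma>"
  shows "map \<sigma> [0..<15] \<in> set aut_indices"
proof -
  note fix3 = index_aut_fixes_3[OF \<sigma>] and perm = index_aut_permutes_245[OF \<sigma>]
  have "map \<sigma> [0..<15] = [\<sigma> 0, \<sigma> 1, \<sigma> 2, \<sigma> 3, \<sigma> 4, \<sigma> 5, \<sigma> 6, \<sigma> 7, \<sigma> 8, \<sigma> 9,
      \<sigma> 10, \<sigma> 11, \<sigma> 12, \<sigma> 13, \<sigma> 14]"
    by (simp add: upt_rec numeral_eq_Suc)
  moreover have "(\<sigma> 2, \<sigma> 4, \<sigma> 5) \<in> {(2,4,5), (2,5,4), (4,2,5), (4,5,2), (5,2,4), (5,4,2)}"
    using three_distinct_cases[OF perm] .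
  moreover have "(\<sigma> 7, \<sigma> 8) \<in> {(7,8), (8,7)}"
    using fix3(2-4) by auto
  ultimately show ?thesis
    unfolding index_aut_blocks(1,2)[OF \<sigma>] fix3(1) index_aut_411[OF \<sigma>] index_aut_33[OF \<sigma>]
    by (elim insertE emptyE; simp add: aut_indices_def)
qed

lemma aut_indices_props:
  "\<forall>c\<in>set aut_indices. length c = 15 \<and> distinct c \<and> (\<forall>C\<in>index_blocks. nth c ` C = C)
     \<and> (\<forall>i\<in>set [0..<15]. \<forall>j\<in>set [0..<15]. idx_le (c ! i) (c ! j) \<longleftrightarrow> idx_le i j)"
  unfolding aut_indices_def index_blocks_def idx_le_def orb_ups_def by code_simp

lemma index_aut_nth_aut_indices: "c \<in> set aut_indices \<Longrightarrow> index_aut (nth c)"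
  using aut_indices_props unfolding index_aut_def by (auto intro: inj_on_nth)

lemma Aut0_set_G_ex_D_ex: "Aut0_set G_ex D_ex = (\<lambda>c. reindex orb 15 (nth c)) ` set aut_indices"
proof (intro equalityI subsetI)
  fix al
  assume "al \<in> Aut0_set G_ex D_ex"
  then obtain \<sigma> where \<sigma>: "index_aut \<sigma>" and al: "al = reindex orb 15 \<sigma>"
    by (rule Aut0_set_imp_reindex)
  have "al = reindex orb 15 (nth (map \<sigma> [0..<15]))"
    unfolding al by (rule reindex_cong) simp
  then show "al \<in> (\<lambda>c. reindex orb 15 (nth c)) ` set aut_indices"
    using index_aut_in_aut_indices[OF \<sigma>] by blast
qed (auto intro: reindex_in_Aut0_set index_aut_nth_aut_indices)


section \<open>Automorphisms commuting with G'/G\<close>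

definition G'_index_act :: "(nat \<Rightarrow> nat) \<Rightarrow> nat \<Rightarrow> nat" where
  "G'_index_act \<eta> k = (if \<eta> \<in> G_ex then k else t_index ! k)"

lemma t_index_less:
  assumes "k < 15" shows "t_index ! k < 15"
proof -
  have "\<forall>x\<in>set t_index. x < 15" and "k < length t_index"
    using assms by (simp_all add: t_index_def)
  then show ?thesis
    by (metis nth_mem)
qed

lemma G'_index_act_less: "k < 15 \<Longrightarrow> G'_index_act \<eta> k < 15"
  by (simp add: G'_index_act_def t_index_less)

lemma orbit_tab_G_ex_act: "g \<in> G_ex \<Longrightarrow> orbit_tab G_ex (tab_act g A) = orbit_tab G_ex A"
  by (rule orbit_tab_act[OF G_ex_comp_right_image])

lemma orbit_tab_G'_ex_act:
  assumes "\<eta> \<in> G'_ex" and "k < 15" and "B \<in> orb k"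
  shows "orbit_tab G_ex (tab_act \<eta> B) = orb (G'_index_act \<eta> k)"
proof -
  obtain g where g: "g \<in> G_ex" and B: "B = tab_act g (orbit_reps ! k)"
    using assms(3) by (auto simp: orb_def orbit_tab_def)
  show ?thesis
  proof (cases "\<eta> \<in> G_ex")
    case True
    then show ?thesis
      using g by (simp add: B G'_index_act_def orb_def orbit_tab_G_ex_act)
  next
    case False
    then obtain h where h: "h \<in> G_ex" and \<eta>: "\<eta> = h \<circ> t_perm"
      using assms(1) by (auto simp: G'_ex_eq)
    have "\<eta> \<circ> g = h \<circ> (t_perm \<circ> g \<circ> t_perm) \<circ> t_perm"
      by (simp add: \<eta> comp_assoc t_perm_involution)
    then have "tab_act \<eta> B = tab_act (h \<circ> (t_perm \<circ> g \<circ> t_perm)) (tab_act t_perm (orbit_reps ! k))"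
      by (simp only: B tab_act_comp)
    moreover have "h \<circ> (t_perm \<circ> g \<circ> t_perm) \<in> G_ex"
      using h t_perm_conj_G_ex[OF g] by (rule G_ex_comp)
    ultimately have "orbit_tab G_ex (tab_act \<eta> B) = orbit_tab G_ex (tab_act t_perm (orbit_reps ! k))"
      by (simp add: orbit_tab_G_ex_act)
    then show ?thesis
      using False t_perm_orbit_reps assms(2) by (simp add: G'_index_act_def)
  qed
qed

lemma orbit_tab_in_orbs:
  assumes "mu \<in> D_ex" and "A \<in> tabloids mu"
  obtains k where "k < 15" and "orbit_tab G_ex A = orb k"
proof -
  have "orbit_tab G_ex A \<in> orbits_D G_ex D_ex"
    using assms unfolding orbits_D_def orbits_shape_def by blast
  then show thesis
    using that unfolding orbits_D_G_ex_D_ex by auto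
qed

lemma orb_eq_orbit_tab:
  assumes "k < 15"
  obtains mu A where "mu \<in> D_ex" and "A \<in> tabloids mu" and "orbit_tab G_ex A = orb k"
proof -
  have "orb k \<in> orbits_D G_ex D_ex"
    using assms unfolding orbits_D_G_ex_D_ex by simp
  then show thesis
    using that unfolding orbits_D_def orbits_shape_def by blast
qed

lemma mem_orb_if_orbit_tab_eq: "orbit_tab G_ex A = orb k \<Longrightarrow> A \<in> orb k"
  using orbit_tab_self[OF id_in_G_ex, of A] by simp

lemma t_perm_in_G'_ex: "t_perm \<in> G'_ex"
proof -
  have "t_perm = (\<lambda>g. g \<circ> t_perm) id"
    by simp
  then show ?thesis
    unfolding G'_ex_eq using id_in_G_ex by blast
qed

lemma Aut0G'_set_imp_commutes:
  assumes \<sigma>: "index_aut \<sigma>" and al: "reindex orb 15 \<sigma> \<in> Aut0G'_set G_ex G'_ex D_ex" and k: "k < 15"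
  shows "\<sigma> (t_index ! k) = t_index ! \<sigma> k"
proof -
  let ?al = "reindex orb 15 \<sigma>" and ?B = "orbit_reps ! \<sigma> k"
  obtain mu A where mu: "mu \<in> D_ex" "A \<in> tabloids mu" and A: "orbit_tab G_ex A = orb k"
    using orb_eq_orbit_tab[OF k] .
  have "orbit_tab G_ex ?B = orb (\<sigma> k)"
    by (simp add: orb_def)
  then have "?al (orbit_tab G_ex A) = orbit_tab G_ex ?B"
    using A k by (simp add: reindex_apply inj_on_orb)
  then have "?al (orbit_tab G_ex (tab_act t_perm A)) = orbit_tab G_ex (tab_act t_perm ?B)"
    using al t_perm_in_G'_ex mu unfolding Aut0G'_set_def by blast
  moreover have "orbit_tab G_ex (tab_act t_perm A) = orb (t_index ! k)"
    using orbit_tab_G'_ex_act[OF t_perm_in_G'_ex k mem_orb_if_orbit_tab_eq[OF A]] t_perm_notin_G_ex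
    by (simp add: G'_index_act_def)
  moreover have "orbit_tab G_ex (tab_act t_perm ?B) = orb (t_index ! \<sigma> k)"
    using orbit_tab_G'_ex_act[OF t_perm_in_G'_ex index_aut_less[OF \<sigma> k], of ?B] t_perm_notin_G_ex
      mem_orb_if_orbit_tab_eq[of ?B] by (simp add: G'_index_act_def orb_def)
  ultimately have "orb (\<sigma> (t_index ! k)) = orb (t_index ! \<sigma> k)"
    using t_index_less[OF k] by (simp add: reindex_apply inj_on_orb)
  then show ?thesis
    using orb_eq_iff index_aut_less[OF \<sigma>] t_index_less k by simp
qed

lemma commutes_imp_Aut0G'_set:
  assumes \<sigma>: "index_aut \<sigma>" and commutes: "\<forall>k<15. \<sigma> (t_index ! k) = t_index ! \<sigma> k"
  shows "reindex orb 15 \<sigma> \<in> Aut0G'_set G_ex G'_ex D_ex"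
proof -
  let ?al = "reindex orb 15 \<sigma>"
  have "?al (orbit_tab G_ex (tab_act \<eta> A)) = orbit_tab G_ex (tab_act \<eta> B)"
    if \<eta>: "\<eta> \<in> G'_ex" and A: "mu \<in> D_ex" "A \<in> tabloids mu"
      and B: "?al (orbit_tab G_ex A) = orbit_tab G_ex B" for \<eta> mu A B
  proof -
    obtain k where k: "k < 15" and orbit_A: "orbit_tab G_ex A = orb k"
      using orbit_tab_in_orbs[OF A] .
    have orbit_B: "orbit_tab G_ex B = orb (\<sigma> k)"
      using B k orbit_A by (simp add: reindex_apply inj_on_orb)
    have "\<sigma> (G'_index_act \<eta> k) = G'_index_act \<eta> (\<sigma> k)"
      using commutes k by (simp add: G'_index_act_def)
    then show ?thesis
      using orbit_tab_G'_ex_act[OF \<eta> k mem_orb_if_orbit_tab_eq[OF orbit_A]]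
        orbit_tab_G'_ex_act[OF \<eta> index_aut_less[OF \<sigma> k] mem_orb_if_orbit_tab_eq[OF orbit_B]]
      by (simp add: reindex_apply inj_on_orb G'_index_act_less k)
  qed
  then show ?thesis
    unfolding Aut0G'_set_def using reindex_in_Aut0_set[OF \<sigma>] by blast
qed

definition aut_G'_indices :: "nat list list" where
  "aut_G'_indices = filter (\<lambda>c. \<forall>k\<in>set [0..<15]. c ! (t_index ! k) = t_index ! (c ! k)) aut_indices"

lemma aut_G'_indices_eq:
  "aut_G'_indices =
    [[0, 1, 2, 3, 4, 5, 6, 7, 8, 9, 10, 11, 12, 13, 14], [0, 1, 2, 3, 4, 5, 6, 8, 7, 9, 10, 11, 12, 13, 14],
     [0, 1, 2, 3, 5, 4, 6, 7, 8, 10, 9, 12, 11, 13, 14], [0, 1, 2, 3, 5, 4, 6, 8, 7, 10, 9, 12, 11, 13, 14]]"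
  unfolding aut_G'_indices_def aut_indices_def t_index_def by code_simp

lemma Aut0G'_set_G_ex_G'_ex_D_ex:
  "Aut0G'_set G_ex G'_ex D_ex = (\<lambda>c. reindex orb 15 (nth c)) ` set aut_G'_indices"
proof -
  have iff: "reindex orb 15 (nth c) \<in> Aut0G'_set G_ex G'_ex D_ex
      \<longleftrightarrow> (\<forall>k\<in>set [0..<15]. c ! (t_index ! k) = t_index ! (c ! k))"
    if c: "c \<in> set aut_indices" for c
  proof
    assume "reindex orb 15 (nth c) \<in> Aut0G'_set G_ex G'_ex D_ex"
    from Aut0G'_set_imp_commutes[OF index_aut_nth_aut_indices[OF c] this]
    show "\<forall>k\<in>set [0..<15]. c ! (t_index ! k) = t_index ! (c ! k)"
      by simp
  next
    assume "\<forall>k\<in>set [0..<15]. c ! (t_index ! k) = t_index ! (c ! k)"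
    then have "\<forall>k<15. c ! (t_index ! k) = t_index ! (c ! k)"
      by simp
    from commutes_imp_Aut0G'_set[OF index_aut_nth_aut_indices[OF c] this]
    show "reindex orb 15 (nth c) \<in> Aut0G'_set G_ex G'_ex D_ex" .
  qed
  have "Aut0G'_set G_ex G'_ex D_ex = Aut0_set G_ex D_ex \<inter> Aut0G'_set G_ex G'_ex D_ex"
    unfolding Aut0G'_set_def by blast
  also have "\<dots> = (\<lambda>c. reindex orb 15 (nth c)) `
      {c \<in> set aut_indices. reindex orb 15 (nth c) \<in> Aut0G'_set G_ex G'_ex D_ex}"
    unfolding Aut0_set_G_ex_D_ex by blast
  also have "{c \<in> set aut_indices. reindex orb 15 (nth c) \<in> Aut0G'_set G_ex G'_ex D_ex} = set aut_G'_indices"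
    unfolding aut_G'_indices_def set_filter using iff by blast
  finally show ?thesis .
qed


definition idx_42 :: "nat \<Rightarrow> nat" where
  "idx_42 k = (if k = 1 then 4 else if k = 2 then 5 else 2)"

definition idx_411 :: "nat \<Rightarrow> nat" where
  "idx_411 k = (if k = 1 then 9 else if k = 2 then 10 else 6)"

definition idx_33 :: "nat \<Rightarrow> nat" where
  "idx_33 k = (if k = 1 then 12 else if k = 2 then 11 else 14)"

definition idx_pair :: "nat \<Rightarrow> nat" where
  "idx_pair k = (if k = 1 then 7 else 8)"

(* The three (4,2)-orbits other than orb 3 are idx_42 1, 2, 3; idx_411 k is the (4,1,1)-orbit
   below idx_42 k and idx_33 k the (3,3)-orbit not below it.  The numbering makes t act as
   index_perm (1 2) (1 2), so that the automorphisms commuting with t are those with p 3 = 3. *)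
definition index_perm :: "(nat \<Rightarrow> nat) \<Rightarrow> (nat \<Rightarrow> nat) \<Rightarrow> nat \<Rightarrow> nat" where
  "index_perm p q i =
     (if i = 4 then idx_42 (p 1) else if i = 5 then idx_42 (p 2) else if i = 2 then idx_42 (p 3)
      else if i = 9 then idx_411 (p 1) else if i = 10 then idx_411 (p 2) else if i = 6 then idx_411 (p 3)
      else if i = 12 then idx_33 (p 1) else if i = 11 then idx_33 (p 2) else if i = 14 then idx_33 (p 3)
      else if i = 7 then idx_pair (q 1) else if i = 8 then idx_pair (q 2) else i)"

lemma index_perm_simps:
  "index_perm p q 4 = idx_42 (p 1)" "index_perm p q 5 = idx_42 (p 2)" "index_perm p q 2 = idx_42 (p 3)"
  "index_perm p q 9 = idx_411 (p 1)" "index_perm p q 10 = idx_411 (p 2)" "index_perm p q 6 = idx_411 (p 3)"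
  "index_perm p q 12 = idx_33 (p 1)" "index_perm p q 11 = idx_33 (p 2)" "index_perm p q 14 = idx_33 (p 3)"
  "index_perm p q 7 = idx_pair (q 1)" "index_perm p q 8 = idx_pair (q 2)"
  by (simp_all add: index_perm_def)

lemma index_perm_idx:
  "k \<in> {1,2,3} \<Longrightarrow> index_perm p q (idx_42 k) = idx_42 (p k)"
  "k \<in> {1,2,3} \<Longrightarrow> index_perm p q (idx_411 k) = idx_411 (p k)"
  "k \<in> {1,2,3} \<Longrightarrow> index_perm p q (idx_33 k) = idx_33 (p k)"
  "k \<in> {1,2} \<Longrightarrow> index_perm p q (idx_pair k) = idx_pair (q k)"
  by (auto simp: idx_42_def idx_411_def idx_33_def idx_pair_def index_perm_simps)

lemma index_perm_less: "i < 15 \<Longrightarrow> index_perm p q i < 15"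
  by (simp add: index_perm_def idx_42_def idx_411_def idx_33_def idx_pair_def)

lemma map_index_perm:
  "map (index_perm p q) [0..<15] = [0, 1, idx_42 (p 3), 3, idx_42 (p 1), idx_42 (p 2), idx_411 (p 3),
     idx_pair (q 1), idx_pair (q 2), idx_411 (p 1), idx_411 (p 2), idx_33 (p 2), idx_33 (p 1), 13, idx_33 (p 3)]"
  by (simp add: upt_rec numeral_eq_Suc index_perm_def)

lemma atLeastAtMost_1_3: "{1..3::nat} = {1,2,3}"
  by auto

lemma atLeastAtMost_1_2: "{1..2::nat} = {1,2}"
  by auto

lemma permutes_1_3_cases:
  assumes "p permutes {1..3::nat}"
  shows "(p 1, p 2, p 3) \<in> {(1,2,3), (1,3,2), (2,1,3), (2,3,1), (3,1,2), (3,2,1)}"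
proof (rule three_distinct_cases)
  show "p 1 \<in> {1,2,3}" "p 2 \<in> {1,2,3}" "p 3 \<in> {1,2,3}"
    using permutes_in_image[OF assms, unfolded atLeastAtMost_1_3] by simp_all
  show "p 1 \<noteq> p 2" "p 1 \<noteq> p 3" "p 2 \<noteq> p 3"
    using permutes_inj[OF assms] by (simp_all add: inj_eq)
qed

lemma permutes_1_2_cases:
  assumes "q permutes {1..2::nat}"
  shows "(q 1, q 2) \<in> {(1,2), (2,1)}"
proof -
  have "q 1 \<in> {1,2}" "q 2 \<in> {1,2}"
    using permutes_in_image[OF assms, unfolded atLeastAtMost_1_2] by simp_all
  moreover have "q 1 \<noteq> q 2"
    using permutes_inj[OF assms] by (simp add: inj_eq)
  ultimately show ?thesis
    by auto
qed

lemma index_perm_in_aut_indices: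
  assumes "p permutes {1..3}" and "q permutes {1..2}"
  shows "map (index_perm p q) [0..<15] \<in> set aut_indices"
  using permutes_1_3_cases[OF assms(1)] permutes_1_2_cases[OF assms(2)]
  unfolding map_index_perm
  by (elim insertE emptyE; simp add: idx_42_def idx_411_def idx_33_def idx_pair_def aut_indices_def)

lemma index_perm_in_aut_G'_indices:
  assumes "p permutes {1..2}" and "q permutes {1..2}"
  shows "map (index_perm p q) [0..<15] \<in> set aut_G'_indices"
proof -
  have "p 3 = 3"
    using permutes_not_in[OF assms(1)] by simp
  then show ?thesis
    using permutes_1_2_cases[OF assms(1)] permutes_1_2_cases[OF assms(2)]
    unfolding map_index_perm
    by (elim insertE emptyE; simp add: idx_42_def idx_411_def idx_33_def idx_pair_def aut_G'_indices_eq)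
qed

lemma index_perm_comp:
  assumes "p' permutes {1..3}" and "q' permutes {1..2}"
  shows "index_perm (p \<circ> p') (q \<circ> q') = index_perm p q \<circ> index_perm p' q'"
proof
  fix i
  have p': "p' 1 \<in> {1,2,3}" "p' 2 \<in> {1,2,3}" "p' 3 \<in> {1,2,3}"
    using permutes_1_3_cases[OF assms(1)] by auto
  have q': "q' 1 \<in> {1,2}" "q' 2 \<in> {1,2}"
    using permutes_1_2_cases[OF assms(2)] by auto
  show "index_perm (p \<circ> p') (q \<circ> q') i = (index_perm p q \<circ> index_perm p' q') i"
  proof (cases "i \<in> {2,4,5,6,9,10,11,12,14,7,8}")
    case True
    then show ?thesis
      by (elim insertE emptyE) (simp_all only: index_perm_simps index_perm_idx p' q' comp_apply)
  next
    case False
    then show ?thesis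
      by (simp add: index_perm_def)
  qed
qed

lemma permutes_eqI:
  assumes "p permutes S" and "p' permutes S" and "\<And>x. x \<in> S \<Longrightarrow> p x = p' x"
  shows "p = p'"
proof
  fix x
  show "p x = p' x"
    by (cases "x \<in> S") (simp_all add: assms(3) permutes_not_in[OF assms(1)] permutes_not_in[OF assms(2)])
qed

lemma index_perm_eqD:
  assumes "p permutes {1..3}" "q permutes {1..2}" "p' permutes {1..3}" "q' permutes {1..2}"
    and eq: "\<And>i. i < 15 \<Longrightarrow> index_perm p q i = index_perm p' q' i"
  shows "p = p'" and "q = q'"
proof -
  have p_eq: "p k = p' k" if "k \<in> {1,2,3}" for k
    using that eq[of 4] eq[of 5] eq[of 2] permutes_1_3_cases[OF assms(1)] permutes_1_3_cases[OF assms(3)]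
    by (auto simp: index_perm_simps idx_42_def)
  show "p = p'"
    using p_eq unfolding atLeastAtMost_1_3[symmetric] by (rule permutes_eqI[OF assms(1,3)])
  have q_eq: "q k = q' k" if "k \<in> {1,2}" for k
    using that eq[of 7] eq[of 8] permutes_1_2_cases[OF assms(2)] permutes_1_2_cases[OF assms(4)]
    by (auto simp: index_perm_simps idx_pair_def)
  show "q = q'"
    using q_eq unfolding atLeastAtMost_1_2[symmetric] by (rule permutes_eqI[OF assms(2,4)])
qed

lemma fun_group_iso_if_inj_hom:
  assumes "group H" and "finite X" and "f ` carrier H \<subseteq> X" and "inj_on f (carrier H)"
    and "card X \<le> card (carrier H)"
    and "\<And>x y. x \<in> carrier H \<Longrightarrow> y \<in> carrier H \<Longrightarrow> f (x \<otimes>\<^bsub>H\<^esub> y) = f x \<circ> f y"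
  shows "fun_group X \<cong> H"
proof -
  have "card (f ` carrier H) = card X"
    using assms(2-5) card_image card_mono by (metis antisym)
  then have "f ` carrier H = X"
    using card_subset_eq[OF assms(2,3)] by simp
  then have "f \<in> iso H (fun_group X)"
    using assms(3,4,6) by (auto simp: iso_def hom_def bij_betw_def fun_group_def)
  then show ?thesis
    using group.iso_sym[OF assms(1)] is_isoI by blast
qed

definition aut_of :: "(nat \<Rightarrow> nat) \<times> (nat \<Rightarrow> nat) \<Rightarrow> tabloid set \<Rightarrow> tabloid set" where
  "aut_of = (\<lambda>(p, q). reindex orb 15 (index_perm p q))"

lemma aut_of_in_reindex_image:
  assumes "map (index_perm p q) [0..<15] \<in> set L"
  shows "aut_of (p, q) \<in> (\<lambda>c. reindex orb 15 (nth c)) ` set L"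
proof -
  have "aut_of (p, q) = reindex orb 15 (nth (map (index_perm p q) [0..<15]))"
    unfolding aut_of_def by (auto intro: reindex_cong)
  then show ?thesis
    using assms by blast
qed

lemma inj_on_aut_of: "inj_on aut_of (carrier (sym_group 3 \<times>\<times> sym_group 2))"
proof (rule inj_onI)
  fix x y
  assume "x \<in> carrier (sym_group 3 \<times>\<times> sym_group 2)" and "y \<in> carrier (sym_group 3 \<times>\<times> sym_group 2)"
    and eq: "aut_of x = aut_of y"
  then obtain p q p' q' where xy: "x = (p, q)" "y = (p', q')"
    and perms: "p permutes {1..3}" "q permutes {1..2}" "p' permutes {1..3}" "q' permutes {1..2}"
    by (auto simp: sym_group_carrier)
  have "index_perm p q i = index_perm p' q' i" if "i < 15" for i
    by (rule reindex_eqD[OF inj_on_orb _ that]) (use eq xy that in \<open>simp_all add: aut_of_def index_perm_less\<close>)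
  then show "x = y"
    using index_perm_eqD[OF perms] xy by simp
qed

lemma aut_of_mult:
  assumes "p' permutes {1..3}" and "q' permutes {1..2}"
  shows "aut_of (p \<circ> p', q \<circ> q') = aut_of (p, q) \<circ> aut_of (p', q')"
  unfolding aut_of_def by (simp add: index_perm_comp[OF assms] reindex_comp inj_on_orb index_perm_less)

lemma card_sym_group: "card (carrier (sym_group n)) = fact n"
  by (simp add: sym_group_def card_permutations)

lemma aut_of_DirProd_mult:
  assumes "y \<in> carrier (sym_group 3 \<times>\<times> sym_group 2)"
  shows "aut_of (x \<otimes>\<^bsub>sym_group k \<times>\<times> sym_group l\<^esub> y) = aut_of x \<circ> aut_of y"
proof -
  obtain p q where x: "x = (p, q)"
    by fastforce
  obtain p' q' where y: "y = (p', q')" and perms: "p' permutes {1..3}" "q' permutes {1..2}"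
    using assms by (auto simp: sym_group_carrier)
  show ?thesis
    using aut_of_mult[OF perms] by (simp add: x y DirProd_def sym_group_def)
qed

lemma Aut0_set_G_ex_D_ex_iso: "fun_group (Aut0_set G_ex D_ex) \<cong> sym_group 3 \<times>\<times> sym_group 2"
proof (rule fun_group_iso_if_inj_hom[where f = aut_of])
  show "group (sym_group 3 \<times>\<times> sym_group 2)"
    by (intro DirProd_group sym_group_is_group)
  show "finite (Aut0_set G_ex D_ex)"
    by (simp add: Aut0_set_G_ex_D_ex)
  show "aut_of ` carrier (sym_group 3 \<times>\<times> sym_group 2) \<subseteq> Aut0_set G_ex D_ex"
    unfolding Aut0_set_G_ex_D_ex
    by (auto simp: sym_group_carrier intro!: aut_of_in_reindex_image index_perm_in_aut_indices)
  have "card (Aut0_set G_ex D_ex) \<le> length aut_indices"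
    unfolding Aut0_set_G_ex_D_ex by (metis card_image_le card_length finite_set order_trans)
  then show "card (Aut0_set G_ex D_ex) \<le> card (carrier (sym_group 3 \<times>\<times> sym_group 2))"
    by (simp add: card_cartesian_product card_sym_group aut_indices_def fact_numeral)
  show "inj_on aut_of (carrier (sym_group 3 \<times>\<times> sym_group 2))"
    by (rule inj_on_aut_of)
qed (rule aut_of_DirProd_mult)

lemma Aut0G'_set_G_ex_G'_ex_D_ex_iso:
  "fun_group (Aut0G'_set G_ex G'_ex D_ex) \<cong> sym_group 2 \<times>\<times> sym_group 2"
proof (rule fun_group_iso_if_inj_hom[where f = aut_of])
  have "p permutes {1..3}" if "p permutes {1..2}" for p :: "nat \<Rightarrow> nat"
    using that by (rule permutes_subset) auto
  then have sub: "carrier (sym_group 2 \<times>\<times> sym_group 2) \<subseteq> carrier (sym_group 3 \<times>\<times> sym_group 2)"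
    by (auto simp: sym_group_carrier)
  show "group (sym_group 2 \<times>\<times> sym_group 2)"
    by (intro DirProd_group sym_group_is_group)
  show "finite (Aut0G'_set G_ex G'_ex D_ex)"
    by (simp add: Aut0G'_set_G_ex_G'_ex_D_ex)
  show "aut_of ` carrier (sym_group 2 \<times>\<times> sym_group 2) \<subseteq> Aut0G'_set G_ex G'_ex D_ex"
    unfolding Aut0G'_set_G_ex_G'_ex_D_ex
    by (auto simp: sym_group_carrier intro!: aut_of_in_reindex_image index_perm_in_aut_G'_indices)
  have "card (Aut0G'_set G_ex G'_ex D_ex) \<le> length aut_G'_indices"
    unfolding Aut0G'_set_G_ex_G'_ex_D_ex by (metis card_image_le card_length finite_set order_trans)
  then show "card (Aut0G'_set G_ex G'_ex D_ex) \<le> card (carrier (sym_group 2 \<times>\<times> sym_group 2))"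
    by (simp add: card_cartesian_product card_sym_group aut_G'_indices_eq)
  show "inj_on aut_of (carrier (sym_group 2 \<times>\<times> sym_group 2))"
    using inj_on_aut_of sub by (rule inj_on_subset)
  show "aut_of (x \<otimes>\<^bsub>sym_group 2 \<times>\<times> sym_group 2\<^esub> y) = aut_of x \<circ> aut_of y"
    if "y \<in> carrier (sym_group 2 \<times>\<times> sym_group 2)" for x y
    using that sub by (intro aut_of_DirProd_mult) blast
qed

theorem theorem10p3p5:
  shows "fun_group (Aut0_set G_ex D_ex) \<cong> DirProd (sym_group 3) (sym_group 2)
       \<and> fun_group (Aut0G'_set G_ex G'_ex D_ex) \<cong> DirProd (sym_group 2) (sym_group 2)"
  using Aut0_set_G_ex_D_ex_iso Aut0G'_set_G_ex_G'_ex_D_ex_iso by blast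

end
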